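(* Let $\mathfrak g$ be a real Lie algebra of dimension $2n$ with a Hermitian structure $(J,g)$, and let $\mathfrak a\subseteq\mathfrak g$ be an abelian ideal of codimension $2$ with $J\mathfrak a=\mathfrak a$. Then there exists a unitary frame $e_1,\dots,e_n$ of $\mathfrak g^{1,0}$ such that $\mathfrak a\otimes\mathbb C$ is spanned by $e_2,\dots,e_n,\bar e_2,\dots,\bar e_n$, and numbers $\lambda\ge0$, $v\in\mathbb C^{n-1}$, $X,Y,Z\in M_{n-1}(\mathbb C)$, such that, writing $\varphi=(\varphi_2,\dots,\varphi_n)^t$, $$d\varphi_1=-\lambda\,\varphi_1\wedge\bar\varphi_1,\qquad d\varphi=-\varphi_1\wedge\bar\varphi_1\,\bar v-\varphi_1\wedge{}^tX\varphi+\bar\varphi_1\wedge\bar Y\varphi-\varphi_1\wedge\bar Z\,\bar\varphi,$$ (i.e. $d\varphi_i=-\bar v_i\varphi_1\wedge\bar\varphi_1-\sum_jX_{ji}\varphi_1\wedge\varphi_j+\sum_j\overline{Y_{ij}}\bar\varphi_1\wedge\varphi_j-\sum_j\overline{Z_{ij}}\varphi_1\wedge\bar\varphi_j$). Moreover, for any such frame the data satisfy $$\lambda(X^\ast+Y)+[X^\ast,Y]-Z\bar Z=0,\qquad \lambda Z-(Z\,{}^tX+YZ)=0.$$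
   Context: A Hermitian structure on a real Lie algebra $\mathfrak g$ is an integrable almost complex structure $J$ together with a $J$-invariant inner product $g$. $\mathfrak g^{1,0}=\{x-\sqrt{-1}Jx\}$; $g$ extended complex-bilinearly; a unitary frame is a basis $e_1,\dots,e_n$ of $\mathfrak g^{1,0}$ with $g(e_i,\bar e_j)=\delta_{ij}$, with dual coframe $\varphi_1,\dots,\varphi_n$; $d$ is the Chevalley–Eilenberg differential ($d\alpha(x,y)=-\alpha([x,y])$). ${}^tM$ is the transpose, $\bar M$ the entrywise conjugate, $M^\ast={}^t\bar M$. *)

theory Defs
  imports "HOL-Analysis.Analysis"
begin

text \<open>A real Lie algebra: a finite-dimensional real vector space 'g (any euclidean_space
  type; its own inner product is NOT used) with a bracket B.\<close>
definition lie_algebra :: "('g::euclidean_space \<Rightarrow> 'g \<Rightarrow> 'g) \<Rightarrow> bool" where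
  "lie_algebra B \<longleftrightarrow> bilinear B \<and> (\<forall>x. B x x = 0) \<and>
     (\<forall>x y z. B x (B y z) + B y (B z x) + B z (B x y) = 0)"

text \<open>Integrable almost complex structure: J^2 = -1 and vanishing Nijenhuis tensor.\<close>
definition integrable_cx :: "('g::euclidean_space \<Rightarrow> 'g \<Rightarrow> 'g) \<Rightarrow> ('g \<Rightarrow> 'g) \<Rightarrow> bool" where
  "integrable_cx B J \<longleftrightarrow> linear J \<and> (\<forall>x. J (J x) = - x) \<and>
     (\<forall>x y. B (J x) (J y) - J (B (J x) y) - J (B x (J y)) - B x y = 0)"

definition herm_metric :: "('g::euclidean_space \<Rightarrow> 'g) \<Rightarrow> ('g \<Rightarrow> 'g \<Rightarrow> real) \<Rightarrow> bool" where
  "herm_metric J G \<longleftrightarrow> bilinear G \<and> (\<forall>x y. G x y = G y x) \<and> (\<forall>x. x \<noteq> 0 \<longrightarrow> G x x > 0) \<and>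
     (\<forall>x y. G (J x) (J y) = G x y)"

definition hermitian_structure where
  "hermitian_structure B J G \<longleftrightarrow> integrable_cx B J \<and> herm_metric J G"

definition abelian_ideal :: "('g::euclidean_space \<Rightarrow> 'g \<Rightarrow> 'g) \<Rightarrow> 'g set \<Rightarrow> bool" where
  "abelian_ideal B a \<longleftrightarrow> subspace a \<and> (\<forall>x\<in>a. \<forall>y. B x y \<in> a) \<and> (\<forall>x\<in>a. \<forall>y\<in>a. B x y = 0)"

section \<open>Complexification: a pair (x,y) stands for x + i y\<close>

definition csmul :: "complex \<Rightarrow> 'g::real_vector \<times> 'g \<Rightarrow> 'g \<times> 'g" where
  "csmul c v = (Re c *\<^sub>R fst v - Im c *\<^sub>R snd v, Re c *\<^sub>R snd v + Im c *\<^sub>R fst v)"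

definition cconj :: "'g::real_vector \<times> 'g \<Rightarrow> 'g \<times> 'g" where
  "cconj v = (fst v, - snd v)"

definition cspan :: "('g::real_vector \<times> 'g) set \<Rightarrow> ('g \<times> 'g) set" where
  "cspan S = {(\<Sum>s\<in>T. csmul (c s) s) | T c. finite T \<and> T \<subseteq> S}"

definition complexify :: "'g::real_vector set \<Rightarrow> ('g \<times> 'g) set" where
  "complexify a = {v. fst v \<in> a \<and> snd v \<in> a}"

text \<open>g^{1,0} = {x - i J x}\<close>
definition g10 :: "('g::real_vector \<Rightarrow> 'g) \<Rightarrow> ('g \<times> 'g) set" where
  "g10 J = {(x, - J x) | x. True}"

text \<open>Complex-bilinear extension of the metric.\<close>
definition Gc :: "('g \<Rightarrow> 'g \<Rightarrow> real) \<Rightarrow> 'g \<times> 'g \<Rightarrow> 'g \<times> 'g \<Rightarrow> complex" where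
  "Gc G v w = Complex (G (fst v) (fst w) - G (snd v) (snd w)) (G (fst v) (snd w) + G (snd v) (fst w))"

definition cext :: "('g \<Rightarrow> complex) \<Rightarrow> 'g \<times> 'g \<Rightarrow> complex" where
  "cext f v = f (fst v) + \<i> * f (snd v)"

definition unitary_frame :: "('g::real_vector \<Rightarrow> 'g) \<Rightarrow> ('g \<Rightarrow> 'g \<Rightarrow> real) \<Rightarrow> nat \<Rightarrow> (nat \<Rightarrow> 'g \<times> 'g) \<Rightarrow> bool" where
  "unitary_frame J G n e \<longleftrightarrow>
     (\<forall>k\<in>{1..n}. e k \<in> g10 J) \<and>
     g10 J \<subseteq> cspan (e ` {1..n}) \<and>
     (\<forall>c. (\<Sum>k\<in>{1..n}. csmul (c k) (e k)) = 0 \<longrightarrow> (\<forall>k\<in>{1..n}. c k = 0)) \<and>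
     (\<forall>i\<in>{1..n}. \<forall>j\<in>{1..n}. Gc G (e i) (cconj (e j)) = (if i = j then 1 else 0))"

text \<open>Dual coframe phi_1..phi_n (complex-valued real-linear functionals on g, extended
  complex-linearly): phi_k(e_j) = delta_kj, phi_k(conj e_j) = 0.\<close>
definition dual_coframe :: "nat \<Rightarrow> (nat \<Rightarrow> 'g::real_vector \<times> 'g) \<Rightarrow> (nat \<Rightarrow> 'g \<Rightarrow> complex) \<Rightarrow> bool" where
  "dual_coframe n e \<phi> \<longleftrightarrow> (\<forall>k\<in>{1..n}. linear (\<phi> k) \<and>
     (\<forall>j\<in>{1..n}. cext (\<phi> k) (e j) = (if k = j then 1 else 0) \<and> cext (\<phi> k) (cconj (e j)) = 0))"

section \<open>Forms (evaluated on real vectors; complex-bilinear extension is unique)\<close>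

definition cnjf :: "('g \<Rightarrow> complex) \<Rightarrow> 'g \<Rightarrow> complex" where
  "cnjf \<alpha> x = cnj (\<alpha> x)"

definition wedge :: "('g \<Rightarrow> complex) \<Rightarrow> ('g \<Rightarrow> complex) \<Rightarrow> 'g \<Rightarrow> 'g \<Rightarrow> complex" where
  "wedge \<alpha> \<beta> x y = \<alpha> x * \<beta> y - \<alpha> y * \<beta> x"

definition dCE :: "('g \<Rightarrow> 'g \<Rightarrow> 'g) \<Rightarrow> ('g \<Rightarrow> complex) \<Rightarrow> 'g \<Rightarrow> 'g \<Rightarrow> complex" where
  "dCE B \<alpha> x y = - \<alpha> (B x y)"

text \<open>The structure equations of the theorem, for a frame with coframe phi, with
  lambda real, v indexed by {2..n}, X Y Z matrices indexed by {2..n}x{2..n}.\<close>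
definition structure_eqs ::
  "('g \<Rightarrow> 'g \<Rightarrow> 'g) \<Rightarrow> nat \<Rightarrow> (nat \<Rightarrow> 'g \<Rightarrow> complex) \<Rightarrow> real \<Rightarrow> (nat \<Rightarrow> complex)
    \<Rightarrow> (nat \<Rightarrow> nat \<Rightarrow> complex) \<Rightarrow> (nat \<Rightarrow> nat \<Rightarrow> complex) \<Rightarrow> (nat \<Rightarrow> nat \<Rightarrow> complex) \<Rightarrow> bool" where
  "structure_eqs B n \<phi> lam v X Y Z \<longleftrightarrow>
     (\<forall>x y. dCE B (\<phi> 1) x y = - complex_of_real lam * wedge (\<phi> 1) (cnjf (\<phi> 1)) x y) \<and>
     (\<forall>i\<in>{2..n}. \<forall>x y. dCE B (\<phi> i) x y =
        - cnj (v i) * wedge (\<phi> 1) (cnjf (\<phi> 1)) x y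
        - (\<Sum>j\<in>{2..n}. X j i * wedge (\<phi> 1) (\<phi> j) x y)
        + (\<Sum>j\<in>{2..n}. cnj (Y i j) * wedge (cnjf (\<phi> 1)) (\<phi> j) x y)
        - (\<Sum>j\<in>{2..n}. cnj (Z i j) * wedge (\<phi> 1) (cnjf (\<phi> j)) x y))"

text \<open>The relations lambda(X^* + Y) + [X^*,Y] - Z conj(Z) = 0 and lambda Z - (Z X^t + Y Z) = 0,
  written entrywise over indices {2..n}.\<close>
definition structure_rels ::
  "nat \<Rightarrow> real \<Rightarrow> (nat \<Rightarrow> nat \<Rightarrow> complex) \<Rightarrow> (nat \<Rightarrow> nat \<Rightarrow> complex) \<Rightarrow> (nat \<Rightarrow> nat \<Rightarrow> complex) \<Rightarrow> bool" where
  "structure_rels n lam X Y Z \<longleftrightarrow>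
     (\<forall>i\<in>{2..n}. \<forall>j\<in>{2..n}.
        complex_of_real lam * (cnj (X j i) + Y i j)
        + (\<Sum>k\<in>{2..n}. cnj (X k i) * Y k j - Y i k * cnj (X j k))
        - (\<Sum>k\<in>{2..n}. Z i k * cnj (Z k j)) = 0) \<and>
     (\<forall>i\<in>{2..n}. \<forall>j\<in>{2..n}.
        complex_of_real lam * Z i j
        - ((\<Sum>k\<in>{2..n}. Z i k * X j k) + (\<Sum>k\<in>{2..n}. Y i k * Z k j)) = 0)"

end

theory Submission
  imports Defs
begin

text \<open>Choose a \<open>G\<close>-orthonormal basis \<open>u\<^sub>k, J u\<^sub>k\<close> (\<open>2 \<le> k \<le> n\<close>) of \<open>a\<close>, complete it by a unit
  vector \<open>u\<^sub>1\<close> orthogonal to \<open>a\<close>, and rotate \<open>u\<^sub>1\<close> in its complex line until \<open>[u\<^sub>1, J u\<^sub>1]\<close> has no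
  \<open>u\<^sub>1\<close>-component and a non-positive \<open>J u\<^sub>1\<close>-component; the frame is \<open>e\<^sub>k = u\<^sub>k - \<i> J u\<^sub>k\<close>.
  As \<open>a\<close> is an abelian ideal, \<open>\<phi>\<^sub>1\<close> kills \<open>a\<close> and \<open>[g, a]\<close>, so \<open>d\<phi>\<^sub>1\<close> is a multiple of
  \<open>\<phi>\<^sub>1 \<and> cnj \<phi>\<^sub>1\<close>, real and non-negative by the choice of phase, and no \<open>d\<phi>\<^sub>i\<close> has an \<open>a \<and> a\<close>
  component; integrability of \<open>J\<close> removes the \<open>cnj \<phi>\<^sub>1 \<and> cnj \<phi>\<^sub>j\<close> components. The relations come from
  applying \<open>\<phi>\<^sub>i\<close> to the Jacobi identity for \<open>Re e\<^sub>1\<close>, \<open>Im e\<^sub>1\<close> and \<open>Re e\<^sub>m\<close> or \<open>Im e\<^sub>m\<close>.\<close>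

lemma if_zero_distribs:
  "cnj (if P then z else 0) = (if P then cnj z else 0)"
  "c * (if P then a else 0) = (if P then c * a else (0::'a::mult_zero))"
  "(if P then a else 0) * c = (if P then a * c else (0::'a::mult_zero))"
  "- (if P then b else 0) = (if P then - b else (0::'b::group_add))"
  "(if P then d else 0) / f = (if P then d / f else (0::'c::field))"
  by simp_all

section \<open>Alternating forms\<close>

lemma lie_bracket_antisym:
  assumes "lie_algebra B"
  shows "B y x = - B x y"
proof -
  have bl: "bilinear B" and z: "\<And>x. B x x = 0" using assms unfolding lie_algebra_def by auto
  have "B (x + y) (x + y) = B x x + B x y + (B y x + B y y)"
    by (simp add: bilinear_ladd[OF bl] bilinear_radd[OF bl])
  then have "B x y + B y x = 0" using z by simp
  then show ?thesis by (simp add: add_eq_0_iff)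
qed

lemma linear_cnjf: "linear \<alpha> \<Longrightarrow> linear (cnjf \<alpha>)"
  unfolding cnjf_def linear_iff by (simp add: scaleR_conv_of_real)

lemma bilinear_wedge: "linear \<alpha> \<Longrightarrow> linear \<beta> \<Longrightarrow> bilinear (wedge \<alpha> \<beta>)"
  unfolding bilinear_def wedge_def linear_iff by (simp add: algebra_simps scaleR_conv_of_real)

lemma bilinear_dCE: "bilinear B \<Longrightarrow> linear \<alpha> \<Longrightarrow> bilinear (dCE B \<alpha>)"
  unfolding bilinear_def linear_iff dCE_def by (simp add: algebra_simps)

lemma bilinear_cmult: "bilinear f \<Longrightarrow> bilinear (\<lambda>x y. (c::complex) * f x y)"
  unfolding bilinear_def linear_iff by (simp add: algebra_simps scaleR_conv_of_real)

lemma bilinear_add: "bilinear f \<Longrightarrow> bilinear g \<Longrightarrow> bilinear (\<lambda>x y. f x y + g x y)"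
  unfolding bilinear_def linear_iff by (simp add: algebra_simps)

lemma bilinear_diff: "bilinear f \<Longrightarrow> bilinear g \<Longrightarrow> bilinear (\<lambda>x y. f x y - g x y)"
  unfolding bilinear_def linear_iff by (simp add: algebra_simps)

lemma bilinear_sum: "(\<And>j. j \<in> S \<Longrightarrow> bilinear (f j)) \<Longrightarrow> bilinear (\<lambda>x y. \<Sum>j\<in>S. f j x y)"
  unfolding bilinear_def linear_iff by (simp add: sum.distrib scaleR_sum_right)

lemma wedge_antisym: "wedge \<alpha> \<beta> y x = - wedge \<alpha> \<beta> x y"
  unfolding wedge_def by simp

lemma dCE_antisym: "lie_algebra B \<Longrightarrow> linear \<alpha> \<Longrightarrow> dCE B \<alpha> y x = - dCE B \<alpha> x y"
  unfolding dCE_def by (simp add: lie_bracket_antisym[of B y x] linear_neg)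

text \<open>\<open>R\<close> only has to pick one of the two orders of each pair of distinct spanning vectors.\<close>
lemma alternating_bilinear_eq:
  fixes f g :: "'a::real_vector \<Rightarrow> 'a \<Rightarrow> 'b::real_vector"
  assumes bf: "bilinear f" and bg: "bilinear g"
    and f_alt: "\<And>x y. f y x = - f x y" and g_alt: "\<And>x y. g y x = - g x y"
    and S: "span S = UNIV"
    and total: "\<And>s t. s \<in> S \<Longrightarrow> t \<in> S \<Longrightarrow> s \<noteq> t \<Longrightarrow> R s t \<or> R t s"
    and agree: "\<And>s t. s \<in> S \<Longrightarrow> t \<in> S \<Longrightarrow> R s t \<Longrightarrow> f s t = g s t"
  shows "f x y = g x y"
proof -
  have diag: "f z z = 0" "g z z = 0" for z
    using f_alt[of z z] g_alt[of z z] by (simp_all add: eq_neg_iff_add_eq_0 flip: scaleR_2)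
  have "f s t = g s t" if s: "s \<in> S" and t: "t \<in> S" for s t
  proof (cases "s = t")
    case False
    then show ?thesis using total[OF s t] agree[OF s t] agree[OF t s] f_alt[of s t] g_alt[of s t] by auto
  qed (simp add: diag)
  then show ?thesis using bilinear_eq[OF bf bg, of UNIV S UNIV S x y] S by simp
qed

section \<open>Hermitian metrics and \<open>J\<close>-orthonormal frames\<close>

locale hermitian_metric =
  fixes J :: "'g::euclidean_space \<Rightarrow> 'g" and G :: "'g \<Rightarrow> 'g \<Rightarrow> real"
  assumes linear_J: "linear J" and J_J [simp]: "J (J x) = - x" and metric: "herm_metric J G"
begin

lemma G_bilinear: "bilinear G" and G_sym: "G x y = G y x" and G_pos: "x \<noteq> 0 \<Longrightarrow> G x x > 0"
  and G_J_J [simp]: "G (J x) (J y) = G x y"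
  using metric unfolding herm_metric_def by blast+

lemma G_simps [simp]:
  "G (x + z) y = G x y + G z y" "G x (y + z) = G x y + G x z"
  "G (x - z) y = G x y - G z y" "G x (y - z) = G x y - G x z"
  "G (- x) y = - G x y" "G x (- y) = - G x y"
  "G (c *\<^sub>R x) y = c * G x y" "G x (c *\<^sub>R y) = c * G x y"
  "G 0 y = 0" "G x 0 = 0"
  using G_bilinear by (simp_all add: bilinear_ladd bilinear_radd bilinear_lsub bilinear_rsub
      bilinear_lneg bilinear_rneg bilinear_lmul bilinear_rmul bilinear_lzero bilinear_rzero)

lemma J_simps [simp]:
  "J (x + y) = J x + J y" "J (x - y) = J x - J y" "J (- x) = - J x"
  "J (c *\<^sub>R x) = c *\<^sub>R J x" "J 0 = 0"
  using linear_J by (simp_all add: linear_add linear_diff linear_neg linear_scale linear_0)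

lemma J_sum: "J (sum f S) = (\<Sum>i\<in>S. J (f i))"
  using linear_sum[OF linear_J] by (simp add: o_def)

lemma J_inj: "J x = J y \<Longrightarrow> x = y"
  by (metis J_J minus_equation_iff)

lemma G_J_left: "G (J x) y = - G x (J y)"
  using G_J_J[of "J x" y] by simp

lemma G_J_self [simp]: "G x (J x) = 0" "G (J x) x = 0"
  using G_J_left[of x x] G_sym[of "J x" x] by simp_all

lemma G_sum_left: "G (sum f S) y = (\<Sum>i\<in>S. G (f i) y)"
proof -
  have "linear (\<lambda>x. G x y)" using G_bilinear unfolding bilinear_def by blast
  from linear_sum[OF this, of f S] show ?thesis by (simp add: o_def)
qed

text \<open>Norm \<open>1/2\<close> is chosen so that \<open>u - \<i> J u\<close> has norm 1 in \<open>g\<^sup>1\<^sup>,\<^sup>0\<close>.\<close>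
definition half_orthonormal :: "'g set \<Rightarrow> bool" where
  "half_orthonormal S \<longleftrightarrow> finite S \<and> (\<forall>s\<in>S. \<forall>t\<in>S. G s t = (if s = t then 1/2 else 0))"

lemma half_orthonormal_coeff:
  assumes "half_orthonormal S" "t \<in> S"
  shows "G (\<Sum>s\<in>S. c s *\<^sub>R s) t = c t / 2"
proof -
  have "G (\<Sum>s\<in>S. c s *\<^sub>R s) t = (\<Sum>s\<in>S. c s * G s t)" by (simp add: G_sum_left)
  also have "\<dots> = (\<Sum>s\<in>S. if s = t then c s / 2 else 0)"
    using assms by (intro sum.cong) (auto simp: half_orthonormal_def)
  also have "\<dots> = c t / 2" using assms by (simp add: half_orthonormal_def)
  finally show ?thesis .
qed

lemma half_orthonormal_independent: "half_orthonormal S \<Longrightarrow> independent S"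
  unfolding independent_explicit
proof (intro conjI allI impI ballI)
  fix c t assume S: "half_orthonormal S" and "(\<Sum>v\<in>S. c v *\<^sub>R v) = 0" and t: "t \<in> S"
  then show "c t = 0" using half_orthonormal_coeff[OF S t, of c] by simp
qed (simp add: half_orthonormal_def)

lemma half_orthonormal_expansion:
  assumes S: "half_orthonormal S" and x: "x \<in> span S"
  shows "x = (\<Sum>s\<in>S. (2 * G x s) *\<^sub>R s)"
proof -
  obtain c where c: "x = (\<Sum>s\<in>S. c s *\<^sub>R s)"
    using x span_finite[of S] S unfolding half_orthonormal_def by auto
  have "2 * G x t = c t" if "t \<in> S" for t
    using half_orthonormal_coeff[OF S that, of c] c by simp
  then show ?thesis by (subst c) (auto intro: sum.cong)
qed

definition J_orthonormal :: "(nat \<Rightarrow> 'g) \<Rightarrow> nat set \<Rightarrow> bool" where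
  "J_orthonormal u I \<longleftrightarrow>
     (\<forall>k\<in>I. \<forall>l\<in>I. G (u k) (u l) = (if k = l then 1/2 else 0) \<and> G (u k) (J (u l)) = 0)"

definition frame_vectors :: "(nat \<Rightarrow> 'g) \<Rightarrow> nat set \<Rightarrow> 'g set" where
  "frame_vectors u I = u ` I \<union> (\<lambda>k. J (u k)) ` I"

lemma J_orthonormal_mono: "J_orthonormal u I \<Longrightarrow> I' \<subseteq> I \<Longrightarrow> J_orthonormal u I'"
  unfolding J_orthonormal_def by blast

lemma J_orthonormalD:
  assumes "J_orthonormal u I" "k \<in> I" "l \<in> I"
  shows "G (u k) (u l) = (if k = l then 1/2 else 0)" "G (J (u k)) (J (u l)) = (if k = l then 1/2 else 0)"
    and "G (u k) (J (u l)) = 0" "G (J (u k)) (u l) = 0"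
  using assms G_sym[of "J (u k)" "u l"] unfolding J_orthonormal_def by auto

lemma J_orthonormal_distinct:
  assumes "J_orthonormal u I" "k \<in> I" "l \<in> I"
  shows "u k = u l \<longleftrightarrow> k = l" and "u k \<noteq> J (u l)"
proof -
  note D = J_orthonormalD[OF assms] and D' = J_orthonormalD[OF assms(1,2,2)]
  show "u k = u l \<longleftrightarrow> k = l" using D(1) D'(1) by (cases "k = l") auto
  show "u k \<noteq> J (u l)" using D(3) D'(1) by auto
qed

lemma J_orthonormal_coeff:
  assumes I: "finite I" and u: "J_orthonormal u I" and j: "j \<in> I"
  shows "G (\<Sum>k\<in>I. \<alpha> k *\<^sub>R u k + \<beta> k *\<^sub>R J (u k)) (u j) = \<alpha> j / 2"
    and "G (\<Sum>k\<in>I. \<alpha> k *\<^sub>R u k + \<beta> k *\<^sub>R J (u k)) (J (u j)) = \<beta> j / 2"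
proof -
  note D = J_orthonormalD[OF u _ j]
  have "G (\<Sum>k\<in>I. \<alpha> k *\<^sub>R u k + \<beta> k *\<^sub>R J (u k)) (u j) = (\<Sum>k\<in>I. if k = j then \<alpha> k / 2 else 0)"
    unfolding G_sum_left by (intro sum.cong) (auto simp: D)
  then show "G (\<Sum>k\<in>I. \<alpha> k *\<^sub>R u k + \<beta> k *\<^sub>R J (u k)) (u j) = \<alpha> j / 2" using I j by simp
  have "G (\<Sum>k\<in>I. \<alpha> k *\<^sub>R u k + \<beta> k *\<^sub>R J (u k)) (J (u j)) = (\<Sum>k\<in>I. if k = j then \<beta> k / 2 else 0)"
    unfolding G_sum_left by (intro sum.cong) (auto simp: D)
  then show "G (\<Sum>k\<in>I. \<alpha> k *\<^sub>R u k + \<beta> k *\<^sub>R J (u k)) (J (u j)) = \<beta> j / 2" using I j by simp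
qed

lemma J_orthonormal_half_orthonormal:
  assumes I: "finite I" and u: "J_orthonormal u I"
  shows "half_orthonormal (frame_vectors u I)" and "card (frame_vectors u I) = 2 * card I"
proof -
  note D = J_orthonormalD[OF u] and N = J_orthonormal_distinct[OF u]
  have "G s t = (if s = t then 1/2 else 0)" if "s \<in> frame_vectors u I" "t \<in> frame_vectors u I" for s t
    using that N J_inj unfolding frame_vectors_def by (auto simp: D)
  then show "half_orthonormal (frame_vectors u I)"
    using I by (simp add: half_orthonormal_def frame_vectors_def)
  have "inj_on u I" "inj_on (\<lambda>k. J (u k)) I" "u ` I \<inter> (\<lambda>k. J (u k)) ` I = {}"
    using N by (auto simp: inj_on_def dest!: J_inj)
  then show "card (frame_vectors u I) = 2 * card I"
    using I by (simp add: frame_vectors_def card_Un_disjoint card_image)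
qed

lemma J_orthonormal_expansion:
  assumes I: "finite I" and u: "J_orthonormal u I" and x: "x \<in> span (frame_vectors u I)"
  shows "x = (\<Sum>k\<in>I. (2 * G x (u k)) *\<^sub>R u k + (2 * G x (J (u k))) *\<^sub>R J (u k))"
proof -
  note N = J_orthonormal_distinct[OF u]
  have inj: "inj_on u I" "inj_on (\<lambda>k. J (u k)) I" and disj: "u ` I \<inter> (\<lambda>k. J (u k)) ` I = {}"
    using N by (auto simp: inj_on_def dest!: J_inj)
  have "x = (\<Sum>s\<in>frame_vectors u I. (2 * G x s) *\<^sub>R s)"
    using half_orthonormal_expansion[OF J_orthonormal_half_orthonormal(1)[OF I u] x] .
  also have "\<dots> = (\<Sum>k\<in>I. (2 * G x (u k)) *\<^sub>R u k) + (\<Sum>k\<in>I. (2 * G x (J (u k))) *\<^sub>R J (u k))"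
    unfolding frame_vectors_def using I disj
    by (simp add: sum.union_disjoint sum.reindex[OF inj(1)] sum.reindex[OF inj(2)])
  finally show ?thesis by (simp add: sum.distrib)
qed

lemma J_orthonormal_span_eq:
  assumes I: "finite I" and u: "J_orthonormal u I" and S: "subspace S"
    and uS: "\<And>k. k \<in> I \<Longrightarrow> u k \<in> S \<and> J (u k) \<in> S" and dim: "dim S = 2 * card I"
  shows "span (frame_vectors u I) = S"
proof (rule span_subspace[OF _ _ S])
  show sub: "frame_vectors u I \<subseteq> S" using uS unfolding frame_vectors_def by auto
  show "S \<subseteq> span (frame_vectors u I)"
    using card_ge_dim_independent[OF sub half_orthonormal_independent]
      J_orthonormal_half_orthonormal[OF I u] dim by simp
qed

lemma J_orthonormal_insert:
  assumes u: "J_orthonormal u I" and m: "m \<notin> I" and w: "G w w = 1/2"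
    and perp: "\<And>k. k \<in> I \<Longrightarrow> G (u k) w = 0 \<and> G (u k) (J w) = 0"
  shows "J_orthonormal (u(m := w)) (insert m I)"
  unfolding J_orthonormal_def
proof (intro ballI)
  fix k l assume "k \<in> insert m I" "l \<in> insert m I"
  then consider "k = m" "l = m" | "k = m" "l \<in> I" | "k \<in> I" "l = m" | "k \<in> I" "l \<in> I" by blast
  then show "G ((u(m := w)) k) ((u(m := w)) l) = (if k = l then 1/2 else 0)
    \<and> G ((u(m := w)) k) (J ((u(m := w)) l)) = 0"
  proof cases
    case 2
    then show ?thesis using m perp[of l] G_sym[of w "u l"] G_J_left[of w "u l"] G_sym[of "J w" "u l"] by auto
  qed (use m w perp u in \<open>auto simp: J_orthonormal_def\<close>)
qed

lemma G_half_normalize: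
  "x \<noteq> 0 \<Longrightarrow> G ((1 / sqrt (2 * G x x)) *\<^sub>R x) ((1 / sqrt (2 * G x x)) *\<^sub>R x) = 1/2"
  using G_pos[of x] by (simp add: power2_eq_square[symmetric])

lemma J_perp_in_subspace:
  assumes S: "subspace S" and JS: "\<forall>x\<in>S. J x \<in> S" and w: "w \<in> S" "G w w = 1/2"
  defines "S' \<equiv> {y \<in> S. G y w = 0 \<and> G y (J w) = 0}"
  shows "subspace S'" and "\<forall>y\<in>S'. J y \<in> S'" and "dim S \<le> dim S' + 2"
proof -
  show "subspace S'" unfolding S'_def subspace_def
    using S by (auto simp: subspace_0 subspace_add subspace_scale)
  show "\<forall>y\<in>S'. J y \<in> S'" unfolding S'_def using JS G_J_left by auto
  have "S \<subseteq> span (insert w (insert (J w) S'))"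
  proof
    fix y assume y: "y \<in> S"
    define y' where "y' = y - (2 * G y w) *\<^sub>R w - (2 * G y (J w)) *\<^sub>R J w"
    have "y' \<in> S'"
      unfolding y'_def S'_def using S y w JS by (simp add: subspace_diff subspace_scale)
    moreover have "y = y' + (2 * G y w) *\<^sub>R w + (2 * G y (J w)) *\<^sub>R J w" unfolding y'_def by simp
    ultimately show "y \<in> span (insert w (insert (J w) S'))"
      by (metis span_add span_base span_scale insertCI)
  qed
  then have "dim S \<le> dim (insert w (insert (J w) S'))" by (metis dim_span dim_subset)
  also have "\<dots> \<le> dim S' + 2"
    using dim_insert[of w "insert (J w) S'"] dim_insert[of "J w" S'] by (auto split: if_splits)
  finally show "dim S \<le> dim S' + 2" .
qed

lemma exists_J_orthonormal:
  assumes "finite I" "subspace S" "\<forall>x\<in>S. J x \<in> S" "2 * card I \<le> dim S"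
  shows "\<exists>u. (\<forall>k\<in>I. u k \<in> S) \<and> J_orthonormal u I"
  using assms
proof (induction I arbitrary: S rule: finite_induct)
  case empty
  then show ?case by (simp add: J_orthonormal_def)
next
  case (insert m I)
  have "\<not> S \<subseteq> {0}"
  proof
    assume "S \<subseteq> {0}"
    then have "dim S = 0" by simp
    with insert.prems(3) insert.hyps show False by simp
  qed
  then obtain x where x: "x \<in> S" "x \<noteq> 0" by auto
  define w where "w = (1 / sqrt (2 * G x x)) *\<^sub>R x"
  have w: "w \<in> S" "G w w = 1/2"
    using x G_half_normalize insert.prems(1) unfolding w_def by (auto simp: subspace_scale)
  define S' where "S' = {y \<in> S. G y w = 0 \<and> G y (J w) = 0}"
  note S' = J_perp_in_subspace[OF insert.prems(1,2) w, folded S'_def]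
  have "2 * card I \<le> dim S'" using S'(3) insert.prems(3) insert.hyps by simp
  then obtain u where u: "\<forall>k\<in>I. u k \<in> S'" "J_orthonormal u I"
    using insert.IH[OF S'(1,2)] by blast
  have "J_orthonormal (u(m := w)) (insert m I)"
    using J_orthonormal_insert[OF u(2) insert.hyps(2) w(2)] u(1) unfolding S'_def by blast
  moreover have "\<forall>k\<in>insert m I. (u(m := w)) k \<in> S" using u(1) w(1) unfolding S'_def by auto
  ultimately show ?case by blast
qed

lemma exists_unit_J_orthogonal:
  assumes A: "half_orthonormal A" and ne: "span A \<noteq> UNIV" and J: "\<forall>x\<in>span A. J x \<in> span A"
  shows "\<exists>w. G w w = 1/2 \<and> (\<forall>x\<in>span A. G x w = 0 \<and> G x (J w) = 0)"
proof -
  obtain z where z: "z \<notin> span A" using ne by auto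
  define z' where "z' = z - (\<Sum>s\<in>A. (2 * G z s) *\<^sub>R s)"
  have orth: "G s z' = 0" if "s \<in> A" for s
    using half_orthonormal_coeff[OF A that, of "\<lambda>s. 2 * G z s"] G_sym[of s] unfolding z'_def by simp
  have perp: "G x z' = 0" if "x \<in> span A" for x
  proof -
    have "G x z' = (\<Sum>s\<in>A. 2 * G x s * G s z')"
      by (subst half_orthonormal_expansion[OF A that]) (simp add: G_sum_left)
    then show ?thesis by (simp add: orth)
  qed
  have "z' \<noteq> 0"
    using z span_sum[of A "\<lambda>s. (2 * G z s) *\<^sub>R s"] unfolding z'_def
    by (auto simp: span_base span_scale)
  define w where "w = (1 / sqrt (2 * G z' z')) *\<^sub>R z'"
  have "G w w = 1/2" using \<open>z' \<noteq> 0\<close> G_half_normalize unfolding w_def by blast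
  moreover have "G x w = 0 \<and> G x (J w) = 0" if "x \<in> span A" for x
    using perp[OF that] perp[OF J[rule_format, OF that]] G_J_left[of x] unfolding w_def by simp
  ultimately show ?thesis by blast
qed

text \<open>Rotating \<open>w\<close> within its complex line leaves \<open>[w, J w]\<close> unchanged, so the phase can be
  chosen to make \<open>[w, J w]\<close> orthogonal to \<open>w\<close> and non-positive along \<open>J w\<close>.\<close>
lemma exists_phase_normalizing_bracket:
  assumes L: "lie_algebra B" and w: "G w w = 1/2"
  shows "\<exists>w' c d. w' = c *\<^sub>R w + d *\<^sub>R J w \<and> G w' w' = 1/2 \<and>
           G (B w' (J w')) w' = 0 \<and> G (B w' (J w')) (J w') \<le> 0"
proof -
  have bl: "bilinear B" and alt: "\<And>x. B x x = 0" using L unfolding lie_algebra_def by auto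
  define b where "b = B w (J w)"
  define p where "p = 2 * G b w"
  define q where "q = 2 * G b (J w)"
  show ?thesis
  proof (cases "p = 0 \<and> q = 0")
    case True
    then show ?thesis
      by (intro exI[of _ w] exI[of _ 1] exI[of _ 0]) (auto simp: w p_def q_def b_def)
  next
    case False
    define r where "r = sqrt (p\<^sup>2 + q\<^sup>2)"
    have r: "r > 0" "r * r = p\<^sup>2 + q\<^sup>2"
      using False unfolding r_def by (auto simp: sum_power2_gt_zero_iff real_sqrt_mult_self)
    define c where "c = - q / r"
    define d where "d = p / r"
    define w' where "w' = c *\<^sub>R w + d *\<^sub>R J w"
    have "c * c + d * d = (p\<^sup>2 + q\<^sup>2) / (r * r)"
      unfolding c_def d_def by (simp add: power2_eq_square add_divide_distrib)
    then have cd: "c * c + d * d = 1" using r False by simp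
    have Jw': "J w' = c *\<^sub>R J w - d *\<^sub>R w" unfolding w'_def by simp
    have "B w' (J w') = (c * c) *\<^sub>R B w (J w) - (d * d) *\<^sub>R B (J w) w"
      unfolding w'_def Jw'
      by (simp add: bilinear_ladd[OF bl] bilinear_radd[OF bl] bilinear_lsub[OF bl] bilinear_rsub[OF bl]
          bilinear_lmul[OF bl] bilinear_rmul[OF bl] alt algebra_simps)
    also have "\<dots> = b"
      unfolding b_def lie_bracket_antisym[OF L, of "J w" w] using cd by (simp flip: scaleR_add_left)
    finally have bracket: "B w' (J w') = b" .
    have "G w' w' = (c * c + d * d) / 2" unfolding w'_def using w G_sym[of "J w" w] by (simp add: algebra_simps)
    moreover have "G b w' = c * (p / 2) + d * (q / 2)" unfolding w'_def p_def q_def by simp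
    moreover have "G b (J w') = c * (q / 2) - d * (p / 2)" unfolding Jw' p_def q_def by simp
    moreover have "c * (p / 2) + d * (q / 2) = 0" "c * (q / 2) - d * (p / 2) = - r / 2"
      unfolding c_def d_def using r by (auto simp: field_simps power2_eq_square)
    ultimately show ?thesis using cd r bracket unfolding w'_def by (intro exI[of _ w'] exI) (auto simp: w'_def)
  qed
qed

lemma exists_adapted_J_frame:
  assumes L: "lie_algebra B" and a: "subspace a" "\<forall>x\<in>a. J x \<in> a"
    and dim_a: "dim a + 2 = DIM('g)" and dim_g: "DIM('g) = 2 * n"
  shows "\<exists>u. J_orthonormal u {1..n} \<and> (\<forall>k\<in>{2..n}. u k \<in> a)
    \<and> (\<forall>x\<in>a. G x (u 1) = 0 \<and> G x (J (u 1)) = 0)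
    \<and> G (B (u 1) (J (u 1))) (u 1) = 0 \<and> G (B (u 1) (J (u 1))) (J (u 1)) \<le> 0
    \<and> span (frame_vectors u {2..n}) = a \<and> span (frame_vectors u {1..n}) = UNIV"
proof -
  have n: "1 \<le> n" and dim_a': "dim a = 2 * card {2..n}"
    using dim_a dim_g DIM_positive[where 'a='g] by auto
  obtain u' where u': "\<forall>k\<in>{2..n}. u' k \<in> a" "J_orthonormal u' {2..n}"
    using exists_J_orthonormal[OF _ a, of "{2..n}"] dim_a' by auto
  have span_a: "span (frame_vectors u' {2..n}) = a"
    using J_orthonormal_span_eq[OF _ u'(2) a(1)] u' a(2) dim_a' by auto
  have "span (frame_vectors u' {2..n}) \<noteq> UNIV" using span_a dim_a by auto
  then obtain w where w: "G w w = 1/2" "\<forall>x\<in>a. G x w = 0 \<and> G x (J w) = 0"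
    using exists_unit_J_orthogonal[OF J_orthonormal_half_orthonormal(1)[OF _ u'(2)]] span_a a(2)
    by auto
  obtain w' c d where w': "w' = c *\<^sub>R w + d *\<^sub>R J w" "G w' w' = 1/2"
    "G (B w' (J w')) w' = 0" "G (B w' (J w')) (J w') \<le> 0"
    using exists_phase_normalizing_bracket[OF L w(1)] by blast
  have perp: "\<forall>x\<in>a. G x w' = 0 \<and> G x (J w') = 0" using w(2) unfolding w'(1) by simp
  define u where "u = u'(1 := w')"
  have "J_orthonormal u (insert 1 {2..n})"
    unfolding u_def using J_orthonormal_insert[OF u'(2) _ w'(2)] perp u'(1) by simp
  moreover have "insert 1 {2..n} = {1..n}" using n by auto
  ultimately have u: "J_orthonormal u {1..n}" by simp
  have "frame_vectors u {2..n} = frame_vectors u' {2..n}" unfolding u_def frame_vectors_def by auto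
  moreover have "span (frame_vectors u {1..n}) = UNIV"
    using J_orthonormal_span_eq[OF _ u subspace_UNIV] dim_g by simp
  moreover have "u 1 = w'" "\<forall>k\<in>{2..n}. u k \<in> a" using u'(1) unfolding u_def by auto
  ultimately show ?thesis using u perp w'(3,4) span_a by (intro exI[of _ u]) simp
qed

end

section \<open>The adapted unitary frame\<close>

lemma cspan_subset_complexify:
  assumes a: "subspace a" and S: "S \<subseteq> complexify a"
  shows "cspan S \<subseteq> complexify a"
proof
  fix v assume "v \<in> cspan S"
  then obtain T c where v: "v = (\<Sum>s\<in>T. csmul (c s) s)" and T: "T \<subseteq> S"
    unfolding cspan_def by blast
  have "fst s \<in> a" "snd s \<in> a" if "s \<in> T" for s using that T S unfolding complexify_def by auto
  then have "fst (csmul (c s) s) \<in> a \<and> snd (csmul (c s) s) \<in> a" if "s \<in> T" for s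
    using that a unfolding csmul_def by (simp add: subspace_add subspace_diff subspace_scale)
  then show "v \<in> complexify a"
    unfolding v by (auto simp: complexify_def fst_sum snd_sum intro!: subspace_sum[OF a])
qed

lemma integrable_dCE_no_02_part:
  assumes J: "integrable_cx B J" and \<alpha>: "linear \<alpha>" "\<And>x. \<alpha> (J x) = \<i> * \<alpha> x"
  shows "dCE B \<alpha> x (J y) + dCE B \<alpha> (J x) y = \<i> * (dCE B \<alpha> x y - dCE B \<alpha> (J x) (J y))"
proof -
  have "B (J x) (J y) - J (B (J x) y) - J (B x (J y)) - B x y = 0"
    using J unfolding integrable_cx_def by blast
  then have "\<alpha> (B (J x) (J y) - J (B (J x) y) - J (B x (J y)) - B x y) = 0"
    using \<alpha>(1) by (simp add: linear_0)
  then have "\<alpha> (B (J x) (J y)) - \<i> * \<alpha> (B (J x) y) - \<i> * \<alpha> (B x (J y)) - \<alpha> (B x y) = 0"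
    using \<alpha> by (simp add: linear_diff)
  then have E: "\<alpha> (B (J x) (J y)) - \<alpha> (B x y) = \<i> * (\<alpha> (B x (J y)) + \<alpha> (B (J x) y))"
    by (simp add: algebra_simps)
  have "\<i> * (dCE B \<alpha> x y - dCE B \<alpha> (J x) (J y)) = \<i> * (\<alpha> (B (J x) (J y)) - \<alpha> (B x y))"
    unfolding dCE_def by (simp add: algebra_simps)
  also have "\<dots> = - (\<alpha> (B x (J y)) + \<alpha> (B (J x) y))"
    unfolding E by (simp flip: mult.assoc)
  finally show ?thesis unfolding dCE_def by simp
qed

locale adapted_frame = hermitian_metric J G for J :: "'g::euclidean_space \<Rightarrow> 'g" and G +
  fixes B :: "'g \<Rightarrow> 'g \<Rightarrow> 'g" and a :: "'g set" and n :: nat and u :: "nat \<Rightarrow> 'g"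
  assumes lie: "lie_algebra B" and integrable: "integrable_cx B J" and ideal: "abelian_ideal B a"
    and J_a: "\<forall>x\<in>a. J x \<in> a"
    and u: "J_orthonormal u {1..n}" and u_a: "\<forall>k\<in>{2..n}. u k \<in> a"
    and u1_perp: "\<forall>x\<in>a. G x (u 1) = 0 \<and> G x (J (u 1)) = 0"
    and bracket_perp: "G (B (u 1) (J (u 1))) (u 1) = 0"
    and bracket_nonpos: "G (B (u 1) (J (u 1))) (J (u 1)) \<le> 0"
    and span_a: "span (frame_vectors u {2..n}) = a"
    and span_g: "span (frame_vectors u {1..n}) = UNIV"
    and n: "1 \<le> n"
begin

definition e :: "nat \<Rightarrow> 'g \<times> 'g" where "e k = (u k, - J (u k))"

definition \<phi> :: "nat \<Rightarrow> 'g \<Rightarrow> complex" where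
  "\<phi> k x = complex_of_real (G x (u k)) + \<i> * complex_of_real (G x (J (u k)))"

lemma subspace_a: "subspace a" and bracket_a_a: "s \<in> a \<Longrightarrow> t \<in> a \<Longrightarrow> B s t = 0"
  using ideal unfolding abelian_ideal_def by blast+

lemma bracket_in_a: "t \<in> a \<Longrightarrow> B s t \<in> a"
proof -
  assume "t \<in> a"
  then have "- B t s \<in> a" using ideal subspace_neg[OF subspace_a] unfolding abelian_ideal_def by blast
  then show "B s t \<in> a" using lie_bracket_antisym[OF lie, of t s] by simp
qed

lemma frame_in_a: "l \<in> {2..n} \<Longrightarrow> u l \<in> a" "l \<in> {2..n} \<Longrightarrow> J (u l) \<in> a"
  using u_a J_a by blast+

lemma \<phi>_linear: "linear (\<phi> k)"
  by (rule linearI) (simp_all add: \<phi>_def algebra_simps scaleR_conv_of_real)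

lemma \<phi>_J: "\<phi> k (J x) = \<i> * \<phi> k x"
  unfolding \<phi>_def using G_J_left[of x "u k"] by (simp add: algebra_simps)

lemma \<phi>_1_a: "x \<in> a \<Longrightarrow> \<phi> 1 x = 0"
  unfolding \<phi>_def using u1_perp by simp

lemma \<phi>_frame:
  assumes "k \<in> {1..n}" "j \<in> {1..n}"
  shows "\<phi> k (u j) = (if k = j then 1/2 else 0)" and "\<phi> k (J (u j)) = (if k = j then \<i>/2 else 0)"
  unfolding \<phi>_def using J_orthonormalD[OF u assms(2,1)] by auto

lemma \<phi>_values:
  assumes "j \<in> {2..n}" "l \<in> {2..n}"
  shows "\<phi> 1 (u 1) = 1/2" "\<phi> 1 (J (u 1)) = \<i>/2"
    and "\<phi> j (u 1) = 0" "\<phi> j (J (u 1)) = 0" "\<phi> 1 (u l) = 0" "\<phi> 1 (J (u l)) = 0"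
    and "\<phi> j (u l) = (if j = l then 1/2 else 0)" "\<phi> j (J (u l)) = (if j = l then \<i>/2 else 0)"
  using \<phi>_frame[of 1 1] \<phi>_frame[of j 1] \<phi>_frame[of 1 l] \<phi>_frame[of j l] assms n by auto

lemma dual_coframe: "dual_coframe n e \<phi>"
  unfolding dual_coframe_def cext_def e_def cconj_def
  using \<phi>_frame \<phi>_linear by (auto simp: linear_neg)

lemma e_inj: "k \<in> {1..n} \<Longrightarrow> l \<in> {1..n} \<Longrightarrow> e k = e l \<longleftrightarrow> k = l"
  using J_orthonormal_distinct(1)[OF u] unfolding e_def by auto

lemma e_neq_cconj_e: "k \<in> {1..n} \<Longrightarrow> l \<in> {1..n} \<Longrightarrow> e k \<noteq> cconj (e l)"
proof
  assume k: "k \<in> {1..n}" and l: "l \<in> {1..n}" and "e k = cconj (e l)"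
  then have "u k = u l" "J (u l) = - J (u l)" unfolding e_def cconj_def by auto
  then have "J (u k) = 0" by (simp add: eq_neg_iff_add_eq_0 flip: scaleR_2)
  then show False using J_orthonormalD(2)[OF u k k] by simp
qed

lemma fst_e [simp]: "fst (e k) = u k"
  unfolding e_def by simp

lemma csmul_e: "csmul c (e k) = (Re c *\<^sub>R u k + Im c *\<^sub>R J (u k), - J (Re c *\<^sub>R u k + Im c *\<^sub>R J (u k)))"
  unfolding csmul_def e_def by (simp add: algebra_simps)

lemma g10_subset_cspan: "g10 J \<subseteq> cspan (e ` {1..n})"
proof
  fix v assume "v \<in> g10 J"
  then obtain x where v: "v = (x, - J x)" unfolding g10_def by auto
  define y where "y k = (2 * G x (u k)) *\<^sub>R u k + (2 * G x (J (u k))) *\<^sub>R J (u k)" for k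
  define c where "c s = Complex (2 * G x (fst s)) (2 * G x (J (fst s)))" for s :: "'g \<times> 'g"
  have x: "(\<Sum>k\<in>{1..n}. y k) = x"
    unfolding y_def using J_orthonormal_expansion[OF _ u, of x] span_g by simp
  have "inj_on e {1..n}" using e_inj by (auto simp: inj_on_def)
  then have "(\<Sum>s\<in>e ` {1..n}. csmul (c s) s) = (\<Sum>k\<in>{1..n}. csmul (c (e k)) (e k))"
    by (simp add: sum.reindex)
  also have "\<dots> = (\<Sum>k\<in>{1..n}. (y k, - J (y k)))"
    by (simp add: csmul_e c_def y_def)
  also have "\<dots> = (sum y {1..n}, - J (sum y {1..n}))"
    by (simp add: prod_eq_iff fst_sum snd_sum sum_negf flip: J_sum)
  also have "\<dots> = v" unfolding x v ..
  finally show "v \<in> cspan (e ` {1..n})" unfolding cspan_def by blast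
qed

lemma e_independent:
  assumes "(\<Sum>k\<in>{1..n}. csmul (c k) (e k)) = 0" and j: "j \<in> {1..n}"
  shows "c j = 0"
proof -
  have "(\<Sum>k\<in>{1..n}. Re (c k) *\<^sub>R u k + Im (c k) *\<^sub>R J (u k)) = 0"
    using arg_cong[OF assms(1), of fst] by (simp add: fst_sum csmul_e)
  then show ?thesis
    using J_orthonormal_coeff[OF _ u j, of "\<lambda>k. Re (c k)" "\<lambda>k. Im (c k)"] by (simp add: complex_eq_iff)
qed

lemma unitary_frame: "unitary_frame J G n e"
proof -
  have "Gc G (e i) (cconj (e j)) = (if i = j then 1 else 0)" if "i \<in> {1..n}" "j \<in> {1..n}" for i j
    unfolding Gc_def e_def cconj_def using J_orthonormalD[OF u that]
    by (simp add: complex_eq_iff one_complex.code)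
  moreover have "e k \<in> g10 J" for k unfolding e_def g10_def by auto
  ultimately show ?thesis unfolding unitary_frame_def using g10_subset_cspan e_independent by blast
qed

lemma complexify_subset_cspan: "complexify a \<subseteq> cspan (e ` {2..n} \<union> cconj ` e ` {2..n})"
proof
  fix v assume "v \<in> complexify a"
  then obtain p q where v: "v = (p, q)" and pq: "p \<in> a" "q \<in> a" unfolding complexify_def by (cases v) auto
  define y where "y z k = (2 * G z (u k)) *\<^sub>R u k + (2 * G z (J (u k))) *\<^sub>R J (u k)" for z k
  have u2: "J_orthonormal u {2..n}" using J_orthonormal_mono[OF u] by auto
  have expand: "(\<Sum>k\<in>{2..n}. y z k) = z" if "z \<in> a" for z
    unfolding y_def using J_orthonormal_expansion[OF _ u2, of z] span_a that by simp
  text \<open>Solving for the coefficients of \<open>e\<^sub>k\<close> and \<open>cconj e\<^sub>k\<close> gives one formula for both.\<close>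
  define c where "c s = Complex (G p (fst s) + G q (snd s)) (G q (fst s) - G p (snd s))" for s :: "'g \<times> 'g"
  have pair: "csmul (c (e k)) (e k) + csmul (c (cconj (e k))) (cconj (e k)) = (y p k, y q k)" for k
    unfolding c_def csmul_def e_def cconj_def y_def
    by (simp add: algebra_simps scaleR_add_left scaleR_diff_left flip: scaleR_2)
  have inj: "inj_on e {2..n}" "inj_on (\<lambda>k. cconj (e k)) {2..n}"
    using e_inj unfolding inj_on_def cconj_def by (auto simp: prod_eq_iff)
  have "e k \<noteq> cconj (e l)" if "k \<in> {2..n}" "l \<in> {2..n}" for k l
    using that e_neq_cconj_e[of k l] by auto
  then have disj: "e ` {2..n} \<inter> cconj ` e ` {2..n} = {}" by blast
  have "(\<Sum>s\<in>e ` {2..n} \<union> cconj ` e ` {2..n}. csmul (c s) s)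
      = (\<Sum>k\<in>{2..n}. csmul (c (e k)) (e k) + csmul (c (cconj (e k))) (cconj (e k)))"
    using disj inj by (simp add: sum.union_disjoint sum.reindex image_image sum.distrib)
  also have "\<dots> = v" unfolding pair v by (simp add: prod_eq_iff fst_sum snd_sum expand pq)
  finally show "v \<in> cspan (e ` {2..n} \<union> cconj ` e ` {2..n})" unfolding cspan_def by blast
qed

lemma cspan_e_eq_complexify: "cspan (e ` {2..n} \<union> cconj ` e ` {2..n}) = complexify a"
proof
  have "e k \<in> complexify a \<and> cconj (e k) \<in> complexify a" if "k \<in> {2..n}" for k
    using that frame_in_a subspace_neg[OF subspace_a] unfolding e_def cconj_def complexify_def by auto
  then show "cspan (e ` {2..n} \<union> cconj ` e ` {2..n}) \<subseteq> complexify a"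
    by (intro cspan_subset_complexify[OF subspace_a]) auto
qed (rule complexify_subset_cspan)

lemma frame_vectors_split: "frame_vectors u {1..n} = {u 1, J (u 1)} \<union> frame_vectors u {2..n}"
proof -
  have "{1..n} = insert 1 {2..n}" using n by auto
  then show ?thesis unfolding frame_vectors_def by auto
qed

lemma alternating_eq_on_frame:
  fixes f g :: "'g \<Rightarrow> 'g \<Rightarrow> complex"
  assumes "bilinear f" "bilinear g" "\<And>x y. f y x = - f x y" "\<And>x y. g y x = - g x y"
    and mixed: "\<And>l s t. l \<in> {2..n} \<Longrightarrow> s \<in> {u 1, J (u 1)} \<Longrightarrow> t \<in> {u l, J (u l)} \<Longrightarrow> f s t = g s t"
    and top: "f (u 1) (J (u 1)) = g (u 1) (J (u 1))"
    and in_a: "\<And>s t. s \<in> a \<Longrightarrow> t \<in> a \<Longrightarrow> f s t = g s t"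
  shows "f x y = g x y"
proof -
  define R where "R s t \<longleftrightarrow> (s = u 1 \<and> t = J (u 1)) \<or> (s \<in> {u 1, J (u 1)} \<and> t \<in> frame_vectors u {2..n})
                    \<or> (s \<in> a \<and> t \<in> a)" for s t
  have fv_a: "frame_vectors u {2..n} \<subseteq> a" using frame_in_a unfolding frame_vectors_def by auto
  have "R s t \<or> R t s" if "s \<in> frame_vectors u {1..n}" "t \<in> frame_vectors u {1..n}" "s \<noteq> t" for s t
    using that fv_a unfolding frame_vectors_split R_def by blast
  moreover have "f s t = g s t" if R: "R s t" for s t
  proof -
    consider "s = u 1" "t = J (u 1)" | "s \<in> {u 1, J (u 1)}" "t \<in> frame_vectors u {2..n}" | "s \<in> a" "t \<in> a"
      using R unfolding R_def by blast
    then show ?thesis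
    proof cases
      case 2
      then obtain l where "l \<in> {2..n}" "t \<in> {u l, J (u l)}" unfolding frame_vectors_def by blast
      with 2 show ?thesis using mixed by blast
    qed (use top in_a in auto)
  qed
  ultimately show ?thesis by (rule alternating_bilinear_eq[OF assms(1-4) span_g])
qed

abbreviation d\<phi> :: "nat \<Rightarrow> 'g \<Rightarrow> 'g \<Rightarrow> complex" where "d\<phi> i \<equiv> dCE B (\<phi> i)"

lemma d\<phi>_bilinear: "bilinear (d\<phi> i)"
  using bilinear_dCE[OF _ \<phi>_linear] lie unfolding lie_algebra_def by blast

lemma d\<phi>_no_02_part: "d\<phi> i x (J y) + d\<phi> i (J x) y = \<i> * (d\<phi> i x y - d\<phi> i (J x) (J y))"
  by (rule integrable_dCE_no_02_part[OF integrable \<phi>_linear \<phi>_J])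

text \<open>The coefficients are read off from \<open>d\<phi>\<^sub>i\<close> at the pairs \<open>(u\<^sub>1, u\<^sub>l)\<close>, \<open>(u\<^sub>1, J u\<^sub>l)\<close>,
  \<open>(J u\<^sub>1, u\<^sub>l)\<close>, \<open>(J u\<^sub>1, J u\<^sub>l)\<close>; by \<open>d\<phi>_no_02_part\<close> these four values depend on three
  coefficients only.\<close>
definition lam :: real where "lam = - 2 * G (B (u 1) (J (u 1))) (J (u 1))"
definition v :: "nat \<Rightarrow> complex" where "v i = cnj (- 2 * \<i> * d\<phi> i (u 1) (J (u 1)))"
definition X :: "nat \<Rightarrow> nat \<Rightarrow> complex" where
  "X l i = 2 * (d\<phi> i (J (u 1)) (J (u l)) - d\<phi> i (u 1) (u l))"
definition Y :: "nat \<Rightarrow> nat \<Rightarrow> complex" where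
  "Y i l = cnj ((d\<phi> i (u 1) (u l) + d\<phi> i (J (u 1)) (J (u l))) - \<i> * (d\<phi> i (u 1) (J (u l)) - d\<phi> i (J (u 1)) (u l)))"
definition Z :: "nat \<Rightarrow> nat \<Rightarrow> complex" where
  "Z i l = cnj (- (d\<phi> i (u 1) (u l) + d\<phi> i (J (u 1)) (J (u l))) - \<i> * (d\<phi> i (u 1) (J (u l)) - d\<phi> i (J (u 1)) (u l)))"

lemma lam_nonneg: "lam \<ge> 0"
  unfolding lam_def using bracket_nonpos by simp

lemma structure_eq_1: "d\<phi> 1 x y = - complex_of_real lam * wedge (\<phi> 1) (cnjf (\<phi> 1)) x y"
proof (rule alternating_eq_on_frame)
  show "bilinear (d\<phi> 1)" by (rule d\<phi>_bilinear)
  show "bilinear (\<lambda>x y. - complex_of_real lam * wedge (\<phi> 1) (cnjf (\<phi> 1)) x y)"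
    by (intro bilinear_cmult bilinear_wedge linear_cnjf \<phi>_linear)
  show "d\<phi> 1 y x = - d\<phi> 1 x y" for x y by (rule dCE_antisym[OF lie \<phi>_linear])
  show "- complex_of_real lam * wedge (\<phi> 1) (cnjf (\<phi> 1)) y x
      = - (- complex_of_real lam * wedge (\<phi> 1) (cnjf (\<phi> 1)) x y)" for x y
    by (simp add: wedge_antisym[of _ _ y x])
  fix l s t assume l: "l \<in> {2..n}" and "s \<in> {u 1, J (u 1)}" "t \<in> {u l, J (u l)}"
  then show "d\<phi> 1 s t = - complex_of_real lam * wedge (\<phi> 1) (cnjf (\<phi> 1)) s t"
    using \<phi>_1_a[OF bracket_in_a] \<phi>_values(5,6)[OF l l] frame_in_a[OF l]
    unfolding dCE_def wedge_def cnjf_def by auto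
next
  have "\<phi> 1 (B (u 1) (J (u 1))) = - \<i> * complex_of_real lam / 2"
    unfolding \<phi>_def lam_def using bracket_perp by simp
  then show "d\<phi> 1 (u 1) (J (u 1)) = - complex_of_real lam * wedge (\<phi> 1) (cnjf (\<phi> 1)) (u 1) (J (u 1))"
    unfolding dCE_def wedge_def cnjf_def using n by (simp add: \<phi>_frame field_simps)
next
  fix s t assume "s \<in> a" "t \<in> a"
  then show "d\<phi> 1 s t = - complex_of_real lam * wedge (\<phi> 1) (cnjf (\<phi> 1)) s t"
    unfolding dCE_def wedge_def cnjf_def by (simp add: bracket_a_a \<phi>_1_a subspace_0[OF subspace_a] del: One_nat_def)
qed

definition structure_rhs :: "nat \<Rightarrow> 'g \<Rightarrow> 'g \<Rightarrow> complex" where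
  "structure_rhs i x y = - cnj (v i) * wedge (\<phi> 1) (cnjf (\<phi> 1)) x y
     - (\<Sum>j\<in>{2..n}. X j i * wedge (\<phi> 1) (\<phi> j) x y)
     + (\<Sum>j\<in>{2..n}. cnj (Y i j) * wedge (cnjf (\<phi> 1)) (\<phi> j) x y)
     - (\<Sum>j\<in>{2..n}. cnj (Z i j) * wedge (\<phi> 1) (cnjf (\<phi> j)) x y)"

lemma structure_rhs_bilinear: "bilinear (structure_rhs i)"
  unfolding structure_rhs_def[abs_def]
  by (intro bilinear_diff bilinear_add bilinear_sum bilinear_cmult bilinear_wedge \<phi>_linear linear_cnjf)

lemma structure_rhs_antisym: "structure_rhs i y x = - structure_rhs i x y"
  unfolding structure_rhs_def wedge_def by (simp add: algebra_simps sum_subtractf)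

lemma structure_eq:
  assumes i: "i \<in> {2..n}"
  shows "d\<phi> i x y = structure_rhs i x y"
proof (rule alternating_eq_on_frame)
  show "bilinear (d\<phi> i)" by (rule d\<phi>_bilinear)
  show "d\<phi> i y x = - d\<phi> i x y" for x y by (rule dCE_antisym[OF lie \<phi>_linear])
  fix l s t assume l: "l \<in> {2..n}" and st: "s \<in> {u 1, J (u 1)}" "t \<in> {u l, J (u l)}"
  have no_02: "d\<phi> i (u 1) (J (u l)) = \<i> * (d\<phi> i (u 1) (u l) - d\<phi> i (J (u 1)) (J (u l))) - d\<phi> i (J (u 1)) (u l)"
    using d\<phi>_no_02_part[of i "u 1" "u l"] by (simp add: eq_diff_eq)
  show "d\<phi> i s t = structure_rhs i s t"
    using st l
    by (auto simp: structure_rhs_def wedge_def cnjf_def \<phi>_values[OF _ l] if_zero_distribs X_def Y_def Z_def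
        no_02 sum.distrib sum_subtractf field_simps cong: if_cong
        simp del: One_nat_def)
next
  show "d\<phi> i (u 1) (J (u 1)) = structure_rhs i (u 1) (J (u 1))"
    unfolding structure_rhs_def wedge_def cnjf_def v_def using i
    by (simp add: \<phi>_values[OF _ i] field_simps del: One_nat_def)
next
  fix s t assume "s \<in> a" "t \<in> a"
  then show "d\<phi> i s t = structure_rhs i s t"
    unfolding structure_rhs_def dCE_def wedge_def cnjf_def
    by (simp add: bracket_a_a \<phi>_1_a linear_0[OF \<phi>_linear] del: One_nat_def)
qed (rule structure_rhs_bilinear, rule structure_rhs_antisym)

lemma structure_eqs: "structure_eqs B n \<phi> lam v X Y Z"
  unfolding structure_eqs_def using structure_eq_1 structure_eq unfolding structure_rhs_def by blast

end

lemma exists_adapted_unitary_frame: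
  fixes B :: "'g::euclidean_space \<Rightarrow> 'g \<Rightarrow> 'g"
  assumes lie: "lie_algebra B" and dim_g: "DIM('g) = 2 * n" and herm: "hermitian_structure B J G"
    and ideal: "abelian_ideal B a" and dim_a: "dim a + 2 = DIM('g)" and J_a: "J ` a = a"
  shows "\<exists>e \<phi> lam v X Y Z. unitary_frame J G n e \<and> dual_coframe n e \<phi> \<and>
    cspan (e ` {2..n} \<union> cconj ` e ` {2..n}) = complexify a \<and> lam \<ge> 0 \<and> structure_eqs B n \<phi> lam v X Y Z"
proof -
  have integrable: "integrable_cx B J" and "herm_metric J G"
    using herm unfolding hermitian_structure_def by auto
  then have "hermitian_metric J G" unfolding integrable_cx_def hermitian_metric_def by blast
  then interpret hermitian_metric J G .
  have a: "subspace a" "\<forall>x\<in>a. J x \<in> a" using ideal J_a unfolding abelian_ideal_def by auto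
  obtain u where "J_orthonormal u {1..n}" "\<forall>k\<in>{2..n}. u k \<in> a"
    "\<forall>x\<in>a. G x (u 1) = 0 \<and> G x (J (u 1)) = 0"
    "G (B (u 1) (J (u 1))) (u 1) = 0" "G (B (u 1) (J (u 1))) (J (u 1)) \<le> 0"
    "span (frame_vectors u {2..n}) = a" "span (frame_vectors u {1..n}) = UNIV"
    using exists_adapted_J_frame[OF lie a dim_a dim_g] by blast
  moreover have "1 \<le> n" using dim_g DIM_positive[where 'a='g] by linarith
  ultimately interpret F: adapted_frame J G B a n u
    using lie ideal integrable a(2) by unfold_locales
  show ?thesis
    using F.unitary_frame F.dual_coframe F.cspan_e_eq_complexify F.lam_nonneg F.structure_eqs by blast
qed

section \<open>Relations from the Jacobi identity\<close>

lemma dual_coframe_values: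
  assumes dc: "dual_coframe n e \<phi>" and k: "k \<in> {1..n}" and j: "j \<in> {1..n}"
  shows "\<phi> k (fst (e j)) = (if k = j then 1/2 else 0)"
    and "\<phi> k (- snd (e j)) = (if k = j then \<i>/2 else 0)"
proof -
  have lin: "linear (\<phi> k)" and "cext (\<phi> k) (e j) = (if k = j then 1 else 0)"
    and "cext (\<phi> k) (cconj (e j)) = 0" using dc k j unfolding dual_coframe_def by auto
  then have sum: "\<phi> k (fst (e j)) + \<i> * \<phi> k (snd (e j)) = (if k = j then 1 else 0)"
     and fst: "\<phi> k (fst (e j)) = \<i> * \<phi> k (snd (e j))"
    by (auto simp: cext_def cconj_def linear_neg)
  from sum have half: "\<i> * \<phi> k (snd (e j)) = (if k = j then 1/2 else 0)"
    unfolding fst by (auto simp: field_simps)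
  then show "\<phi> k (fst (e j)) = (if k = j then 1/2 else 0)" unfolding fst .
  have "\<phi> k (- snd (e j)) = \<i> * (\<i> * \<phi> k (snd (e j)))"
    using lin by (simp add: linear_neg flip: mult.assoc)
  then show "\<phi> k (- snd (e j)) = (if k = j then \<i>/2 else 0)" unfolding half by simp
qed

locale coframe_structure =
  fixes B :: "'g::euclidean_space \<Rightarrow> 'g \<Rightarrow> 'g" and n :: nat and e :: "nat \<Rightarrow> 'g \<times> 'g"
    and \<phi> :: "nat \<Rightarrow> 'g \<Rightarrow> complex" and lam :: real and v :: "nat \<Rightarrow> complex"
    and X Y Z :: "nat \<Rightarrow> nat \<Rightarrow> complex"
  assumes lie: "lie_algebra B" and coframe: "dual_coframe n e \<phi>"
    and eqs: "structure_eqs B n \<phi> lam v X Y Z"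
begin

lemma \<phi>_linear: "i \<in> {1..n} \<Longrightarrow> linear (\<phi> i)"
  using coframe unfolding dual_coframe_def by blast

lemma \<phi>_1_bracket: "\<phi> 1 (B x y) = complex_of_real lam * wedge (\<phi> 1) (cnjf (\<phi> 1)) x y"
proof -
  have "dCE B (\<phi> 1) x y = - complex_of_real lam * wedge (\<phi> 1) (cnjf (\<phi> 1)) x y"
    using eqs unfolding structure_eqs_def by blast
  then show ?thesis unfolding dCE_def by simp
qed

lemma \<phi>_bracket:
  assumes "i \<in> {2..n}"
  shows "\<phi> i (B x y) = cnj (v i) * wedge (\<phi> 1) (cnjf (\<phi> 1)) x y
        + (\<Sum>j\<in>{2..n}. X j i * wedge (\<phi> 1) (\<phi> j) x y)
        - (\<Sum>j\<in>{2..n}. cnj (Y i j) * wedge (cnjf (\<phi> 1)) (\<phi> j) x y)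
        + (\<Sum>j\<in>{2..n}. cnj (Z i j) * wedge (\<phi> 1) (cnjf (\<phi> j)) x y)"
proof -
  have "dCE B (\<phi> i) x y = - cnj (v i) * wedge (\<phi> 1) (cnjf (\<phi> 1)) x y
        - (\<Sum>j\<in>{2..n}. X j i * wedge (\<phi> 1) (\<phi> j) x y)
        + (\<Sum>j\<in>{2..n}. cnj (Y i j) * wedge (cnjf (\<phi> 1)) (\<phi> j) x y)
        - (\<Sum>j\<in>{2..n}. cnj (Z i j) * wedge (\<phi> 1) (cnjf (\<phi> j)) x y)"
    using eqs assms unfolding structure_eqs_def by blast
  then show ?thesis unfolding dCE_def by (simp add: algebra_simps)
qed

definition x\<^sub>1 :: 'g where "x\<^sub>1 = fst (e 1)"
definition x\<^sub>2 :: 'g where "x\<^sub>2 = - snd (e 1)"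

lemma x_coords:
  assumes "k \<in> {2..n}"
  shows "\<phi> 1 x\<^sub>1 = 1/2" "\<phi> 1 x\<^sub>2 = \<i>/2" "\<phi> k x\<^sub>1 = 0" "\<phi> k x\<^sub>2 = 0"
  using dual_coframe_values[OF coframe, of 1 1] dual_coframe_values[OF coframe, of k 1] assms
  unfolding x\<^sub>1_def x\<^sub>2_def by auto

text \<open>The entries of the two relations are \<open>- cnj (rel\<^sub>1 i j)\<close> and \<open>- cnj (rel\<^sub>2 i j)\<close>; this is the form
  in which the Jacobi identity produces them.\<close>
definition rel\<^sub>1 :: "nat \<Rightarrow> nat \<Rightarrow> complex" where
  "rel\<^sub>1 i m = (\<Sum>k\<in>{2..n}. - X k i * cnj (Y k m) + cnj (Y i k) * X m k + cnj (Z i k) * Z k m)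
      - complex_of_real lam * (X m i + cnj (Y i m))"
definition rel\<^sub>2 :: "nat \<Rightarrow> nat \<Rightarrow> complex" where
  "rel\<^sub>2 i m = (\<Sum>k\<in>{2..n}. cnj (Y i k) * cnj (Z k m) + cnj (Z i k) * cnj (X m k))
      - complex_of_real lam * cnj (Z i m)"

end

text \<open>The Jacobi identity for \<open>x\<^sub>1, x\<^sub>2, Q\<close> is used with \<open>Q = Re e\<^sub>m\<close> (\<open>q = 1/2\<close>) and
  \<open>Q = - Im e\<^sub>m\<close> (\<open>q = \<i>/2\<close>); the two choices separate the two relations.\<close>
locale jacobi_test_vector = coframe_structure +
  fixes i m :: nat and Q and q :: complex
  assumes i: "i \<in> {2..n}" and m: "m \<in> {2..n}"
    and Q_1: "\<phi> 1 Q = 0" and Q_k: "\<And>k. k \<in> {2..n} \<Longrightarrow> \<phi> k Q = (if k = m then q else 0)"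
begin

lemmas coords = x_coords Q_1 Q_k

lemma bracket_x\<^sub>2_Q:
  shows "\<phi> 1 (B x\<^sub>2 Q) = 0"
    and "j \<in> {2..n} \<Longrightarrow> \<phi> j (B x\<^sub>2 Q) = \<i>/2 * (X m j * q + cnj (Y j m) * q + cnj (Z j m) * cnj q)"
  using m by (simp_all add: \<phi>_1_bracket \<phi>_bracket wedge_def cnjf_def coords if_zero_distribs
      algebra_simps cong: if_cong del: One_nat_def)

lemma bracket_Q_x\<^sub>1:
  shows "\<phi> 1 (B Q x\<^sub>1) = 0"
    and "j \<in> {2..n} \<Longrightarrow> \<phi> j (B Q x\<^sub>1) = - 1/2 * (X m j * q - cnj (Y j m) * q + cnj (Z j m) * cnj q)"
  using m by (simp_all add: \<phi>_1_bracket \<phi>_bracket wedge_def cnjf_def coords if_zero_distribs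
      algebra_simps cong: if_cong del: One_nat_def)

lemma bracket_x\<^sub>1_x\<^sub>2: "\<phi> 1 (B x\<^sub>1 x\<^sub>2) = - \<i> * complex_of_real lam / 2"
  using m by (simp add: \<phi>_1_bracket wedge_def cnjf_def coords field_simps del: One_nat_def)

lemma jacobi_coefficients: "q * rel\<^sub>1 i m + cnj q * rel\<^sub>2 i m = 0"
proof -
  have "B x\<^sub>1 (B x\<^sub>2 Q) + B x\<^sub>2 (B Q x\<^sub>1) + B Q (B x\<^sub>1 x\<^sub>2) = 0"
    using lie unfolding lie_algebra_def by blast
  then have "\<phi> i (B x\<^sub>1 (B x\<^sub>2 Q) + B x\<^sub>2 (B Q x\<^sub>1) + B Q (B x\<^sub>1 x\<^sub>2)) = 0"
    using \<phi>_linear[of i] i by (simp add: linear_0)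
  then have J0: "\<phi> i (B x\<^sub>1 (B x\<^sub>2 Q)) + \<phi> i (B x\<^sub>2 (B Q x\<^sub>1)) + \<phi> i (B Q (B x\<^sub>1 x\<^sub>2)) = 0"
    using \<phi>_linear[of i] i by (simp add: linear_add)
  define g where "g k = q * (- X k i * cnj (Y k m) + cnj (Y i k) * X m k + cnj (Z i k) * Z k m)
      + cnj q * (cnj (Y i k) * cnj (Z k m) + cnj (Z i k) * cnj (X m k))" for k
  text \<open>\<open>\<phi>\<^sub>1\<close> kills both inner brackets, so the first two terms only involve their \<open>\<phi>\<^sub>k\<close>-components.\<close>
  have "\<phi> i (B x\<^sub>1 (B x\<^sub>2 Q)) + \<phi> i (B x\<^sub>2 (B Q x\<^sub>1))
      = (\<Sum>k\<in>{2..n}. X k i * (1/2 * \<phi> k (B x\<^sub>2 Q)) - cnj (Y i k) * (1/2 * \<phi> k (B x\<^sub>2 Q))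
            + cnj (Z i k) * (1/2 * cnj (\<phi> k (B x\<^sub>2 Q)))
          + (X k i * (\<i>/2 * \<phi> k (B Q x\<^sub>1)) - cnj (Y i k) * (-\<i>/2 * \<phi> k (B Q x\<^sub>1))
            + cnj (Z i k) * (\<i>/2 * cnj (\<phi> k (B Q x\<^sub>1)))))"
    by (simp add: \<phi>_bracket[OF i, of x\<^sub>1] \<phi>_bracket[OF i, of x\<^sub>2] wedge_def cnjf_def coords
        bracket_x\<^sub>2_Q(1) bracket_Q_x\<^sub>1(1) sum_negf
        sum.distrib sum_subtractf del: One_nat_def)
  also have "\<dots> = - (\<i>/2) * (\<Sum>k\<in>{2..n}. g k)"
    unfolding sum_distrib_left g_def
    by (intro sum.cong refl) (simp add: bracket_x\<^sub>2_Q(2) bracket_Q_x\<^sub>1(2) algebra_simps)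
  finally have T12: "\<phi> i (B x\<^sub>1 (B x\<^sub>2 Q)) + \<phi> i (B x\<^sub>2 (B Q x\<^sub>1)) = - (\<i>/2) * (\<Sum>k\<in>{2..n}. g k)" .
  have T3: "\<phi> i (B Q (B x\<^sub>1 x\<^sub>2))
      = \<i> * complex_of_real lam / 2 * (X m i * q + cnj (Y i m) * q + cnj (Z i m) * cnj q)"
    using i m by (simp add: \<phi>_bracket wedge_def cnjf_def coords bracket_x\<^sub>1_x\<^sub>2 if_zero_distribs
        algebra_simps cong: if_cong del: One_nat_def)
  have "(\<Sum>k\<in>{2..n}. g k) = q * (\<Sum>k\<in>{2..n}. - X k i * cnj (Y k m) + cnj (Y i k) * X m k + cnj (Z i k) * Z k m)
       + cnj q * (\<Sum>k\<in>{2..n}. cnj (Y i k) * cnj (Z k m) + cnj (Z i k) * cnj (X m k))"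
    unfolding g_def by (rule trans[OF sum.distrib]) (simp only: sum_distrib_left)
  then have "- (\<i>/2) * (q * rel\<^sub>1 i m + cnj q * rel\<^sub>2 i m) = 0"
    using J0 T12 T3 unfolding rel\<^sub>1_def rel\<^sub>2_def by (simp add: algebra_simps)
  then show ?thesis by simp
qed

end

context coframe_structure
begin

lemma jacobi_relations:
  assumes i: "i \<in> {2..n}" and m: "m \<in> {2..n}"
  shows "rel\<^sub>1 i m = 0" and "rel\<^sub>2 i m = 0"
proof -
  have m': "m \<in> {1..n}" and one: "1 \<in> {1..n}" using m by auto
  have sub: "k \<in> {2..n} \<Longrightarrow> k \<in> {1..n}" for k by auto
  note vals = dual_coframe_values[OF coframe]
  interpret re: jacobi_test_vector B n e \<phi> lam v X Y Z i m "fst (e m)" "1/2"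
    by unfold_locales (use i m vals(1)[OF one m'] vals(1)[OF sub m'] in auto)
  interpret im: jacobi_test_vector B n e \<phi> lam v X Y Z i m "- snd (e m)" "\<i>/2"
    by unfold_locales (use i m vals(2)[OF one m'] vals(2)[OF sub m'] in auto)
  have "rel\<^sub>1 i m + rel\<^sub>2 i m = 0" using re.jacobi_coefficients by (simp add: field_simps)
  moreover have "rel\<^sub>1 i m - rel\<^sub>2 i m = 0" using im.jacobi_coefficients by (simp add: field_simps)
  ultimately show "rel\<^sub>1 i m = 0" "rel\<^sub>2 i m = 0" by (simp_all add: algebra_simps)
qed

lemma structure_rels: "structure_rels n lam X Y Z"
  unfolding structure_rels_def
proof (intro conjI ballI)
  fix i j assume i: "i \<in> {2..n}" and j: "j \<in> {2..n}"
  have "complex_of_real lam * (cnj (X j i) + Y i j)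
        + (\<Sum>k\<in>{2..n}. cnj (X k i) * Y k j - Y i k * cnj (X j k))
        - (\<Sum>k\<in>{2..n}. Z i k * cnj (Z k j)) = - cnj (rel\<^sub>1 i j)"
    unfolding rel\<^sub>1_def by (simp add: cnj_sum sum.distrib sum_subtractf sum_negf algebra_simps)
  then show "complex_of_real lam * (cnj (X j i) + Y i j)
        + (\<Sum>k\<in>{2..n}. cnj (X k i) * Y k j - Y i k * cnj (X j k))
        - (\<Sum>k\<in>{2..n}. Z i k * cnj (Z k j)) = 0" using jacobi_relations(1)[OF i j] by simp
  have "complex_of_real lam * Z i j - ((\<Sum>k\<in>{2..n}. Z i k * X j k) + (\<Sum>k\<in>{2..n}. Y i k * Z k j))
      = - cnj (rel\<^sub>2 i j)"
    unfolding rel\<^sub>2_def by (simp add: cnj_sum sum.distrib algebra_simps)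
  then show "complex_of_real lam * Z i j - ((\<Sum>k\<in>{2..n}. Z i k * X j k) + (\<Sum>k\<in>{2..n}. Y i k * Z k j)) = 0"
    using jacobi_relations(2)[OF i j] by simp
qed

end

theorem mainTheorem8:
  fixes B :: "'g::euclidean_space \<Rightarrow> 'g \<Rightarrow> 'g" and J :: "'g \<Rightarrow> 'g"
    and G :: "'g \<Rightarrow> 'g \<Rightarrow> real" and a :: "'g set" and n :: nat
  assumes "lie_algebra B"
    and "DIM('g) = 2 * n"
    and "hermitian_structure B J G"
    and "abelian_ideal B a"
    and "dim a + 2 = DIM('g)"
    and "J ` a = a"
  shows "(\<exists>e \<phi> lam v X Y Z. unitary_frame J G n e \<and> dual_coframe n e \<phi> \<and>
            cspan (e ` {2..n} \<union> cconj ` e ` {2..n}) = complexify a \<and>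
            lam \<ge> 0 \<and> structure_eqs B n \<phi> lam v X Y Z)
       \<and> (\<forall>e \<phi> lam v X Y Z. unitary_frame J G n e \<and> dual_coframe n e \<phi> \<and>
            cspan (e ` {2..n} \<union> cconj ` e ` {2..n}) = complexify a \<and>
            structure_eqs B n \<phi> lam v X Y Z \<longrightarrow> structure_rels n lam X Y Z)"
  using exists_adapted_unitary_frame[OF assms]
    coframe_structure.structure_rels[OF coframe_structure.intro[OF assms(1)]] by blast

end
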